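(* Let $\mathbb{K}$ be a field, $A$ a $\mathbb{K}$-algebra, $\beta_1\in A$ arbitrary, and $\beta_0\in A$ nilpotent of degree $2$. Then the set $$\{\beta_1^j: j\ge0\}\cup\{\beta_1^j\beta_0: j\ge0\}\cup\{\beta_1^j\beta_0\beta_1: j\ge0\}\cup\{\beta_1^j\beta_0\beta_1\beta_0: j\ge0\}$$ is linearly independent over $\mathbb{K}$ if and only if the set $$\{\beta_1^j\beta_0: j\ge0\}\cup\{\beta_1^j\beta_0\beta_1\beta_0: j\ge0\}$$ is linearly independent over $\mathbb{K}$.
   Context: "Nilpotent of degree $2$" means $\beta_0^2=0$ (and $\beta_0\neq 0$). *)

theory Defs
  imports Complex_Main
begin

definition is_algebra :: "('k::field \<Rightarrow> 'a::ring_1 \<Rightarrow> 'a) \<Rightarrow> bool" where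
  "is_algebra scale \<longleftrightarrow> vector_space scale \<and>
     (\<forall>c x y. scale c (x * y) = scale c x * y) \<and>
     (\<forall>c x y. scale c (x * y) = x * scale c y)"

definition lin_indep_family :: "('k::field \<Rightarrow> 'a::ab_group_add \<Rightarrow> 'a) \<Rightarrow> ('i \<Rightarrow> 'a) \<Rightarrow> 'i set \<Rightarrow> bool" where
  "lin_indep_family scale f I \<longleftrightarrow> inj_on f I \<and> \<not> module.dependent scale (f ` I)"

definition tail_word :: "'a::ring_1 \<Rightarrow> 'a \<Rightarrow> nat \<Rightarrow> 'a" where
  "tail_word b0 b1 k = (if k = 0 then 1 else if k = 1 then b0 else if k = 2 then b0 * b1
                        else b0 * b1 * b0)"

end

theory Submission
  imports Defs
begin

text \<open>Right multiplication by \<open>\<beta>\<^sub>0\<close> is linear; it kills the words ending in \<open>\<beta>\<^sub>0\<close>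
  and sends \<open>\<beta>\<^sub>1\<^sup>j\<close> and \<open>\<beta>\<^sub>1\<^sup>j\<beta>\<^sub>0\<beta>\<^sub>1\<close> injectively to \<open>\<beta>\<^sub>1\<^sup>j\<beta>\<^sub>0\<close> and \<open>\<beta>\<^sub>1\<^sup>j\<beta>\<^sub>0\<beta>\<^sub>1\<beta>\<^sub>0\<close>.
  Multiplying a linear relation among all the words by \<open>\<beta>\<^sub>0\<close> therefore gives a relation
  among the words ending in \<open>\<beta>\<^sub>0\<close> whose coefficients are those of the other words; if the
  former are independent, these coefficients vanish, and what remains of the original
  relation involves only words ending in \<open>\<beta>\<^sub>0\<close>.\<close>

context vector_space
begin

lemma lin_indep_family_iff_scalars_zero:
  "lin_indep_family scale f I \<longleftrightarrow>
    (\<forall>S c. finite S \<longrightarrow> S \<subseteq> I \<longrightarrow> (\<Sum>i\<in>S. c i *s f i) = 0 \<longrightarrow> (\<forall>i\<in>S. c i = 0))"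
  (is "_ \<longleftrightarrow> ?scalars_zero")
proof
  assume "lin_indep_family scale f I"
  then have inj: "inj_on f I" and indep: "independent (f ` I)"
    unfolding lin_indep_family_def by auto
  show ?scalars_zero
  proof (intro allI impI ballI)
    fix S c i
    assume S: "finite S" "S \<subseteq> I" and rel: "(\<Sum>i\<in>S. c i *s f i) = 0" and "i \<in> S"
    have inj_S: "inj_on f S" using inj S(2) by (rule inj_on_subset)
    define u where "u v = c (inv_into S f v)" for v
    have "(\<Sum>v\<in>f ` S. u v *s v) = (\<Sum>i\<in>S. c i *s f i)"
      using inj_S by (simp add: sum.reindex u_def)
    then have "u (f i) = 0"
      using independentD[OF indep, of "f ` S" u "f i"] S rel \<open>i \<in> S\<close> by auto
    then show "c i = 0" using inj_S \<open>i \<in> S\<close> by (simp add: u_def)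
  qed
next
  assume scalars_zero: ?scalars_zero
  have "inj_on f I"
  proof (rule inj_onI, rule ccontr)
    fix i j assume ij: "i \<in> I" "j \<in> I" "f i = f j" "i \<noteq> j"
    let ?c = "\<lambda>x. if x = i then 1 else - 1 :: 'a"
    have "(\<Sum>x\<in>{i, j}. ?c x *s f x) = 0"
      using ij by (simp add: scale_minus_left)
    then have "?c i = 0"
      using scalars_zero[rule_format, of "{i, j}" ?c i] ij by simp
    then show False by simp
  qed
  moreover have "independent (f ` I)"
    unfolding independent_explicit_module
  proof (intro allI impI)
    fix t u v
    assume t: "finite t" "t \<subseteq> f ` I" and rel: "(\<Sum>v\<in>t. u v *s v) = 0" and "v \<in> t"
    obtain S where S: "S \<subseteq> I" "inj_on f S" "t = f ` S"
      using t(2) by (auto simp: subset_image_inj)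
    have "(\<Sum>i\<in>S. u (f i) *s f i) = 0"
      using rel S by (simp add: sum.reindex)
    moreover have "finite S" using t(1) S by (simp add: finite_image_iff)
    ultimately have "\<forall>i\<in>S. u (f i) = 0" using scalars_zero[rule_format, of S "\<lambda>i. u (f i)"] S(1) by blast
    then show "u v = 0" using \<open>v \<in> t\<close> S(3) by blast
  qed
  ultimately show "lin_indep_family scale f I"
    unfolding lin_indep_family_def by simp
qed

lemma lin_indep_family_subset:
  "lin_indep_family scale f I \<Longrightarrow> J \<subseteq> I \<Longrightarrow> lin_indep_family scale f J"
  unfolding lin_indep_family_def
  by (meson dependent_mono image_mono inj_on_subset)

end

lemma lin_indep_family_extend_by_linear:
  assumes lin: "Vector_Spaces.linear scale scale \<phi>"
    and indep_J: "lin_indep_family scale f J" and "J \<subseteq> I"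
    and inj_\<sigma>: "inj_on \<sigma> (I - J)" and \<sigma>_into: "\<sigma> ` (I - J) \<subseteq> J"
    and \<phi>_outside: "\<And>i. i \<in> I - J \<Longrightarrow> \<phi> (f i) = f (\<sigma> i)"
    and \<phi>_inside: "\<And>i. i \<in> J \<Longrightarrow> \<phi> (f i) = 0"
  shows "lin_indep_family scale f I"
proof -
  interpret Vector_Spaces.linear scale scale \<phi> by (fact lin)
  note scalars_zero = vs1.lin_indep_family_iff_scalars_zero
  have zero_J: "\<forall>i\<in>T. c i = 0" if "finite T" "T \<subseteq> J" "(\<Sum>i\<in>T. scale (c i) (f i)) = 0" for T c
    using indep_J that unfolding scalars_zero by blast
  show ?thesis
    unfolding scalars_zero
  proof (intro allI impI)
    fix S c assume S: "finite S" "S \<subseteq> I" and rel: "(\<Sum>i\<in>S. scale (c i) (f i)) = 0"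
    have inj_S: "inj_on \<sigma> (S - J)" using inj_\<sigma> by (rule inj_on_subset) (use S(2) in blast)
    have "0 = \<phi> (\<Sum>i\<in>S. scale (c i) (f i))" using rel by simp
    also have "\<dots> = (\<Sum>i\<in>S. scale (c i) (\<phi> (f i)))" by (simp add: sum scale)
    also have "\<dots> = (\<Sum>i\<in>S - J. scale (c i) (\<phi> (f i)))"
      using S(1) \<phi>_inside by (intro sum.mono_neutral_right) auto
    also have "\<dots> = (\<Sum>i\<in>S - J. scale (c i) (f (\<sigma> i)))"
      using S(2) \<phi>_outside by (intro sum.cong) auto
    also have "\<dots> = (\<Sum>i\<in>\<sigma> ` (S - J). scale (c (inv_into (S - J) \<sigma> i)) (f i))"
      using inj_S by (simp add: sum.reindex)
    finally have "\<forall>i\<in>\<sigma> ` (S - J). c (inv_into (S - J) \<sigma> i) = 0"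
      using S \<sigma>_into by (intro zero_J) auto
    then have zero_outside: "\<forall>i\<in>S - J. c i = 0"
      using inj_S by auto
    then have "(\<Sum>i\<in>S. scale (c i) (f i)) = (\<Sum>i\<in>S \<inter> J. scale (c i) (f i))"
      using S(1) by (intro sum.mono_neutral_right) auto
    then have "\<forall>i\<in>S \<inter> J. c i = 0" using rel S(1) by (intro zero_J) auto
    with zero_outside show "\<forall>i\<in>S. c i = 0" by blast
  qed
qed

lemma is_algebra_linear_mult_right:
  "is_algebra scale \<Longrightarrow> Vector_Spaces.linear scale scale (\<lambda>x. x * a)"
  unfolding is_algebra_def Vector_Spaces.linear_def module_hom_def module_hom_axioms_def
    module_iff_vector_space
  by (simp add: distrib_right)

lemma tail_word_mult_right_nilpotent:
  assumes "b0 * b0 = 0" and "k < 4"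
  shows "tail_word b0 b1 k * b0 = (if even k then tail_word b0 b1 (Suc k) else 0)"
proof -
  have "k = 0 \<or> k = 1 \<or> k = 2 \<or> k = 3" using assms(2) by auto
  then show ?thesis using assms(1) by (auto simp: tail_word_def mult.assoc)
qed

theorem proposition1:
  fixes scale :: "'k::field \<Rightarrow> 'a::ring_1 \<Rightarrow> 'a"
    and b0 b1 :: 'a
  assumes "is_algebra scale"
    and "b0 ^ 2 = 0" and "b0 \<noteq> 0"
  shows "lin_indep_family scale (\<lambda>(j, k). b1 ^ j * tail_word b0 b1 k) {(j, k). k < 4}
     \<longleftrightarrow> lin_indep_family scale (\<lambda>(j, k). b1 ^ j * tail_word b0 b1 k) {(j, k). k = 1 \<or> k = 3}"
    (is "lin_indep_family _ ?f ?I \<longleftrightarrow> lin_indep_family _ ?f ?J")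
proof
  have lin: "Vector_Spaces.linear scale scale (\<lambda>x. x * b0)"
    using assms(1) by (rule is_algebra_linear_mult_right)
  have J_subset: "?J \<subseteq> ?I" by auto
  show "lin_indep_family scale ?f ?J" if "lin_indep_family scale ?f ?I"
    using Vector_Spaces.linear.axioms(1)[OF lin] that J_subset by (rule vector_space.lin_indep_family_subset)
  have b0_sq: "b0 * b0 = 0" using assms(2) by (simp add: power2_eq_square)
  have I_minus_J: "?I - ?J = {(j, k). k < 4 \<and> even k}" by auto presburger
  show "lin_indep_family scale ?f ?I" if "lin_indep_family scale ?f ?J"
  proof (rule lin_indep_family_extend_by_linear[OF lin that J_subset, where \<sigma> = "\<lambda>(j, k). (j, Suc k)"])
    show "inj_on (\<lambda>(j, k). (j, Suc k)) (?I - ?J)" by (auto simp: inj_on_def)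
    show "(\<lambda>(j, k). (j, Suc k)) ` (?I - ?J) \<subseteq> ?J" unfolding I_minus_J by auto
    show "?f i * b0 = ?f ((\<lambda>(j, k). (j, Suc k)) i)" if "i \<in> ?I - ?J" for i
      using that unfolding I_minus_J by (auto simp: mult.assoc tail_word_mult_right_nilpotent[OF b0_sq])
    show "?f i * b0 = 0" if "i \<in> ?J" for i
      using that by (auto simp: mult.assoc tail_word_mult_right_nilpotent[OF b0_sq])
  qed
qed

end
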